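(* Let $P$ be a finite poset, $\epsilon\in\{1,-1\}$, $\xi\in S^{(\epsilon)}$ and $d=\xi(-\infty)$. The following are equivalent. (1) $T^\xi$ is a generator of $\omega^{(\epsilon)}$. (2) There are elements $z_0>w_1<z_1>w_2<\cdots<z_{s-1}>w_s$ of $P$ ($s\ge0$) and $C_0,\ldots,C_s\in C_\xi^{[d-\epsilon]}$ such that (a) $s=0$, or $z_0\in C_0$, $w_s\in C_s$ and $w_i,z_i\in C_i$ for $1\le i\le s-1$; and (b) $\xi(z)=\epsilon$ for every $z\in C_i\cap(w_i,z_i)$ and every $0\le i\le s$, where $w_0=-\infty$, $z_s=\infty$. (3) There is a $q^{(\epsilon)}$-reduced sequence $y_0,x_1,\ldots,y_{t-1},x_t$ satisfying condition N' and $C_0,\ldots,C_t\in C_\xi^{[d-\epsilon]}$ such that (a) $t=0$, or $y_0\in C_0$, $x_t\in C_t$ and $x_i,y_i\in C_i$ for $1\le i\le t-1$; and (b) $\xi(z)=\epsilon$ for every $z\in C_i\cap(x_i,y_i)$ and every $0\le i\le t$, where $x_0=-\infty$, $y_t=\infty$.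
   Context: $P^\pm=P\cup\{-\infty,\infty\}$, $-\infty<z<\infty$ for $z\in P$; intervals $(a,b)$ are open intervals in $P^\pm$. $P^-=P\cup\{-\infty\}$; $\xi^+(B)=\sum_{b\in B}\xi(b)$. Saturated chain from $x$ to $y$: $x=z_0\lessdot\cdots\lessdot z_t=y$ (covering relations), length $t$. $q^{(\epsilon)}\mathrm{dist}(x,y)=\max\{\epsilon t:$ saturated chain of length $t$ from $x$ to $y$ in $P^\pm\}$. For $w_0<z_0>w_1<z_1>\cdots<z_{s-1}>w_s<z_s$ in $P^\pm$, $q^{(\epsilon)}(w_0,z_0,\ldots,w_s,z_s)=\sum_{\ell=0}^s q^{(\epsilon)}\mathrm{dist}(w_\ell,z_\ell)-\sum_{\ell=0}^{s-1}q^{(\epsilon)}\mathrm{dist}(w_{\ell+1},z_\ell)$. Condition N': $y_0>x_1<y_1>\cdots<y_{t-1}>x_t$ in $P$ and $y_i\not>x_j$ whenever $i\le j-2$ (empty sequence allowed). Such a sequence is $q^{(\epsilon)}$-reduced if, with $x_0=-\infty$, $y_t=\infty$, $q^{(\epsilon)}\mathrm{dist}(x_i,y_j)<q^{(\epsilon)}(x_i,y_i,\ldots,x_j,y_j)$ for all $0\le i<j\le t$ with $x_i<y_j$. $S^{(m)}=\{\xi\in\mathbb Z^{P^-}:\xi(x)\ge m\ \forall x\in P,\ \xi(-\infty)\ge\xi^+(C)+m$ for every maximal chain $C$ of $P\}$; $C_\xi^{[m]}$ = set of maximal chains $C$ of $P$ with $\xi^+(C)=m$. $R=\mathbb K[\mathcal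 C(P)]=\bigoplus_{\xi\in S^{(0)}}\mathbb KT^\xi$ (Ehrhart ring of the chain polytope, $T^\xi=\prod_{x\in P^-}T_x^{\xi(x)}$, $\deg T^\xi=\xi(-\infty)$), $\omega^{(1)}=\omega=\bigoplus_{S^{(1)}}\mathbb KT^\xi$ the canonical ideal, $\omega^{(-1)}=R:\omega=\bigoplus_{S^{(-1)}}\mathbb KT^\xi$. A monomial $T^\xi\in\omega^{(\epsilon)}$ is a generator if it lies in the minimal monomial generating set of the $R$-module $\omega^{(\epsilon)}$, i.e. is not $T^{\xi_1}T^{\xi_2}$ with $\xi_1\in S^{(0)}$, $\xi_1(-\infty)>0$, $\xi_2\in S^{(\epsilon)}$. *)

theory Defs
  imports Main
begin

text \<open>The poset P is a finite subset of a type of class order (with the induced order).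
  P^\<pm> is modelled by the datatype below: NInf = -\<infinity>, PInf = +\<infinity>.\<close>

datatype 'a ext = NInf | Elem 'a | PInf

fun lessE :: "('a::order) ext \<Rightarrow> 'a ext \<Rightarrow> bool" where
  "lessE NInf (Elem _) = True"
| "lessE NInf PInf = True"
| "lessE (Elem a) (Elem b) = (a < b)"
| "lessE (Elem _) PInf = True"
| "lessE _ _ = False"

definition PE :: "'a set \<Rightarrow> 'a ext set" where
  "PE P = {NInf, PInf} \<union> Elem ` P"

definition PM :: "'a set \<Rightarrow> 'a ext set" where
  "PM P = insert NInf (Elem ` P)"

definition covers :: "('a::order) set \<Rightarrow> 'a ext \<Rightarrow> 'a ext \<Rightarrow> bool" where
  "covers P a b \<longleftrightarrow> a \<in> PE P \<and> b \<in> PE P \<and> lessE a b \<and>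
     \<not> (\<exists>c\<in>PE P. lessE a c \<and> lessE c b)"

definition satchain :: "('a::order) set \<Rightarrow> 'a ext \<Rightarrow> 'a ext \<Rightarrow> nat \<Rightarrow> bool" where
  "satchain P a b t \<longleftrightarrow> (\<exists>zs. length zs = Suc t \<and> zs ! 0 = a \<and> zs ! t = b \<and>
     (\<forall>i<t. covers P (zs ! i) (zs ! Suc i)))"

definition qdist :: "('a::order) set \<Rightarrow> int \<Rightarrow> 'a ext \<Rightarrow> 'a ext \<Rightarrow> int" where
  "qdist P eps a b = Max {eps * int t | t. satchain P a b t}"

definition qseq :: "('a::order) set \<Rightarrow> int \<Rightarrow> (nat \<Rightarrow> 'a ext) \<Rightarrow> (nat \<Rightarrow> 'a ext) \<Rightarrow> nat \<Rightarrow> nat \<Rightarrow> int" where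
  "qseq P eps W Z i j = (\<Sum>l = i..j. qdist P eps (W l) (Z l))
      - (\<Sum>l = i..<j. qdist P eps (W (Suc l)) (Z l))"

definition lowE :: "(nat \<Rightarrow> 'a) \<Rightarrow> nat \<Rightarrow> 'a ext" where
  "lowE x i = (if i = 0 then NInf else Elem (x i))"

definition highE :: "(nat \<Rightarrow> 'a) \<Rightarrow> nat \<Rightarrow> nat \<Rightarrow> 'a ext" where
  "highE y t i = (if i = t then PInf else Elem (y i))"

definition condN' :: "('a::order) set \<Rightarrow> nat \<Rightarrow> (nat \<Rightarrow> 'a) \<Rightarrow> (nat \<Rightarrow> 'a) \<Rightarrow> bool" where
  "condN' P t y x \<longleftrightarrow>
     (\<forall>i<t. y i \<in> P \<and> x (Suc i) \<in> P \<and> x (Suc i) < y i) \<and>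
     (\<forall>i. 1 \<le> i \<and> i < t \<longrightarrow> x i < y i) \<and>
     (\<forall>i j. i < t \<and> 1 \<le> j \<and> j \<le> t \<and> i + 2 \<le> j \<longrightarrow> \<not> (x j < y i))"

definition qreduced :: "('a::order) set \<Rightarrow> int \<Rightarrow> nat \<Rightarrow> (nat \<Rightarrow> 'a) \<Rightarrow> (nat \<Rightarrow> 'a) \<Rightarrow> bool" where
  "qreduced P eps t y x \<longleftrightarrow>
     (\<forall>i j. i < j \<and> j \<le> t \<and> lessE (lowE x i) (highE y t j) \<longrightarrow>
        qdist P eps (lowE x i) (highE y t j) < qseq P eps (lowE x) (highE y t) i j)"

definition is_chain :: "('a::order) set \<Rightarrow> 'a set \<Rightarrow> bool" where
  "is_chain P C \<longleftrightarrow> C \<subseteq> P \<and> (\<forall>a\<in>C. \<forall>b\<in>C. a \<le> b \<or> b \<le> a)"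

definition max_chain :: "('a::order) set \<Rightarrow> 'a set \<Rightarrow> bool" where
  "max_chain P C \<longleftrightarrow> is_chain P C \<and> (\<forall>D. is_chain P D \<and> C \<subseteq> D \<longrightarrow> D = C)"

definition xiplus :: "('a ext \<Rightarrow> int) \<Rightarrow> 'a set \<Rightarrow> int" where
  "xiplus xi C = (\<Sum>b\<in>C. xi (Elem b))"

text \<open>S^(m); \<xi> is a function on P^- (values outside P^- are irrelevant).\<close>
definition Sm :: "('a::order) set \<Rightarrow> int \<Rightarrow> ('a ext \<Rightarrow> int) \<Rightarrow> bool" where
  "Sm P m xi \<longleftrightarrow> (\<forall>x\<in>P. xi (Elem x) \<ge> m) \<and>
     (\<forall>C. max_chain P C \<longrightarrow> xi NInf \<ge> xiplus xi C + m)"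

definition Cxi :: "('a::order) set \<Rightarrow> ('a ext \<Rightarrow> int) \<Rightarrow> int \<Rightarrow> 'a set set" where
  "Cxi P xi m = {C. max_chain P C \<and> xiplus xi C = m}"

definition is_generator :: "('a::order) set \<Rightarrow> int \<Rightarrow> ('a ext \<Rightarrow> int) \<Rightarrow> bool" where
  "is_generator P eps xi \<longleftrightarrow> Sm P eps xi \<and>
     \<not> (\<exists>xi1 xi2. Sm P 0 xi1 \<and> xi1 NInf > 0 \<and> Sm P eps xi2 \<and>
          (\<forall>v\<in>PM P. xi v = xi1 v + xi2 v))"

end

theory Submission
  imports Defs
begin

text \<open>
  (2) implies (1): if \<xi> = \<xi>1 + \<xi>2 with \<xi>1 in S^(0) of positive degree and \<xi>2 in S^(\<epsilon>), every
  chain C_i of the zigzag is tight for \<xi>1, so it has a least element a_i of positive \<xi>1-weight,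
  and no element of P below a_i has positive weight. Since \<xi>(a_i) > \<epsilon>, a_i is not in (w_i, z_i);
  inductively w_i < a_i and hence z_i \<le> a_i, which is absurd for i = s.

  (1) implies (2): if there is no zigzag, the maximal elements reachable as tops of partial
  zigzags form an antichain meeting every tight chain, and its indicator function, of degree 1,
  splits off from \<xi>.

  (2) implies (3): a zigzag of minimal length will do. If x_j < y_i with j \<ge> i + 2, the segments
  strictly between i and j can be skipped. If q(x_i, y_i, ..., x_j, y_j) \<le> qdist(x_i, y_j), splice
  C_i below x_i and C_j above y_j along a saturated chain realising qdist(x_i, y_j); telescoping
  the bound of S^(\<epsilon>) over the chains spliced between consecutive segments shows that this
  maximal chain is tight with \<xi> = \<epsilon> strictly between x_i and y_j, so it replaces segments i..j.
\<close>

section \<open>The extended poset and maximal chains\<close>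

instantiation ext :: (order) order
begin

definition less_ext :: "'a ext \<Rightarrow> 'a ext \<Rightarrow> bool" where
  "less_ext = lessE"

definition less_eq_ext :: "'a ext \<Rightarrow> 'a ext \<Rightarrow> bool" where
  "less_eq_ext a b \<longleftrightarrow> a = b \<or> lessE a b"

instance
proof
  fix a b c :: "'a ext"
  show "a < b \<longleftrightarrow> a \<le> b \<and> \<not> b \<le> a"
    unfolding less_ext_def less_eq_ext_def by (cases a; cases b) auto
  show "a \<le> a" unfolding less_eq_ext_def by simp
  show "a \<le> b \<Longrightarrow> b \<le> c \<Longrightarrow> a \<le> c"
    unfolding less_eq_ext_def by (cases a; cases b; cases c) auto
  show "a \<le> b \<Longrightarrow> b \<le> a \<Longrightarrow> a = b"
    unfolding less_eq_ext_def by (cases a; cases b) auto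
qed

end

lemma less_ext_simps [simp]:
  "Elem a < Elem b \<longleftrightarrow> a < b"
  "NInf < x \<longleftrightarrow> x \<noteq> NInf"
  "x < PInf \<longleftrightarrow> x \<noteq> PInf"
  "\<not> x < NInf"
  "\<not> PInf < x"
  unfolding less_ext_def by (cases x; simp)+

lemma less_eq_ext_simps [simp]:
  "Elem a \<le> Elem b \<longleftrightarrow> a \<le> b"
  "NInf \<le> x"
  "x \<le> PInf"
  "x \<le> NInf \<longleftrightarrow> x = NInf"
  "PInf \<le> x \<longleftrightarrow> x = PInf"
  unfolding less_eq_ext_def by (cases x; auto simp: order_le_less)+

lemma lessE_eq_less [simp]: "lessE = (<)"
  by (simp add: less_ext_def)



lemma max_chain_subset: "max_chain P C \<Longrightarrow> C \<subseteq> P"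
  unfolding max_chain_def is_chain_def by auto

lemma max_chain_comparable: "max_chain P C \<Longrightarrow> a \<in> C \<Longrightarrow> b \<in> C \<Longrightarrow> a \<le> b \<or> b \<le> a"
  unfolding max_chain_def is_chain_def by auto

lemma max_chain_memI:
  assumes "max_chain P C" "x \<in> P" "\<forall>c\<in>C. c \<le> x \<or> x \<le> c"
  shows "x \<in> C"
proof -
  have "is_chain P (insert x C)"
    using assms unfolding max_chain_def is_chain_def by auto
  with assms(1) show ?thesis
    unfolding max_chain_def by blast
qed

lemma finite_max_chain: "finite P \<Longrightarrow> max_chain P C \<Longrightarrow> finite C"
  using max_chain_subset finite_subset by blast

lemma chain_extends_to_max_chain:
  assumes "finite P" "is_chain P D"
  obtains C where "max_chain P C" "D \<subseteq> C"
proof -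
  let ?K = "{E. is_chain P E \<and> D \<subseteq> E}"
  have "finite ?K"
    using assms(1) by (auto intro: finite_subset[of _ "Pow P"] simp: is_chain_def)
  then obtain C where "C \<in> ?K" and C_max: "\<forall>E\<in>?K. C \<le> E \<longrightarrow> C = E"
    using finite_has_maximal2[of ?K D] assms(2) by blast
  then have "max_chain P C"
    unfolding max_chain_def by (metis (mono_tags, lifting) mem_Collect_eq order_trans)
  with \<open>C \<in> ?K\<close> show thesis using that by blast
qed

lemma finite_chain_has_least:
  fixes S :: "'a::order set"
  assumes "finite S" "S \<noteq> {}" "\<forall>a\<in>S. \<forall>b\<in>S. a \<le> b \<or> b \<le> a"
  obtains m where "m \<in> S" "\<forall>x\<in>S. m \<le> x"
  using finite_has_minimal[OF assms(1,2)] assms(3) by metis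

lemma finite_chain_has_greatest:
  fixes S :: "'a::order set"
  assumes "finite S" "S \<noteq> {}" "\<forall>a\<in>S. \<forall>b\<in>S. a \<le> b \<or> b \<le> a"
  obtains m where "m \<in> S" "\<forall>x\<in>S. x \<le> m"
  using finite_has_maximal[OF assms(1,2)] assms(3) by metis

lemma Sm_lower_bound: "Sm P m xi \<Longrightarrow> x \<in> P \<Longrightarrow> m \<le> xi (Elem x)"
  unfolding Sm_def by blast

lemma Sm_max_chain: "Sm P m xi \<Longrightarrow> max_chain P C \<Longrightarrow> xiplus xi C \<le> xi NInf - m"
  unfolding Sm_def by force

section \<open>Zigzags yield generators\<close>

definition zigzag :: "('a::order) set \<Rightarrow> ('a ext \<Rightarrow> int) \<Rightarrow> int \<Rightarrow> nat \<Rightarrow> (nat \<Rightarrow> 'a) \<Rightarrow> (nat \<Rightarrow> 'a)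
    \<Rightarrow> (nat \<Rightarrow> 'a set) \<Rightarrow> bool" where
  "zigzag P xi eps s z w C \<longleftrightarrow>
     (\<forall>i<s. z i \<in> P \<and> w (Suc i) \<in> P \<and> w (Suc i) < z i) \<and>
     (\<forall>i. 1 \<le> i \<and> i < s \<longrightarrow> w i < z i) \<and>
     (\<forall>i\<le>s. C i \<in> Cxi P xi (xi NInf - eps)) \<and>
     (s = 0 \<or> (z 0 \<in> C 0 \<and> w s \<in> C s \<and> (\<forall>i. 1 \<le> i \<and> i < s \<longrightarrow> w i \<in> C i \<and> z i \<in> C i))) \<and>
     (\<forall>i\<le>s. \<forall>c\<in>C i. lowE w i < Elem c \<and> Elem c < highE z s i \<longrightarrow> xi (Elem c) = eps)"

lemma zigzagD:
  assumes "zigzag P xi eps s z w C"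
  shows "i < s \<Longrightarrow> w (Suc i) < z i"
    and "i \<le> s \<Longrightarrow> max_chain P (C i)"
    and "i \<le> s \<Longrightarrow> xiplus xi (C i) = xi NInf - eps"
    and "i < s \<Longrightarrow> z i \<in> C i"
    and "0 < i \<Longrightarrow> i \<le> s \<Longrightarrow> w i \<in> C i"
    and "i \<le> s \<Longrightarrow> c \<in> C i \<Longrightarrow> lowE w i < Elem c \<Longrightarrow> Elem c < highE z s i \<Longrightarrow> xi (Elem c) = eps"
  using assms unfolding zigzag_def Cxi_def
  by (auto simp: Suc_le_eq dest: le_neq_implies_less) (metis gr0I)

lemma xiplus_add:
  "C \<subseteq> P \<Longrightarrow> \<forall>v\<in>PM P. xi v = xi1 v + xi2 v \<Longrightarrow> xiplus xi C = xiplus xi1 C + xiplus xi2 C"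
  unfolding xiplus_def PM_def by (simp add: sum.distrib[symmetric] subset_iff)

lemma tight_chain_of_sum:
  assumes "\<forall>v\<in>PM P. xi v = xi1 v + xi2 v" "Sm P 0 xi1" "Sm P eps xi2"
    and "max_chain P C" "xiplus xi C = xi NInf - eps"
  shows "xiplus xi1 C = xi1 NInf"
proof -
  have "xiplus xi C = xiplus xi1 C + xiplus xi2 C"
    using xiplus_add[OF max_chain_subset[OF assms(4)] assms(1)] .
  moreover have "xiplus xi1 C \<le> xi1 NInf" "xiplus xi2 C \<le> xi2 NInf - eps"
    using Sm_max_chain[OF assms(2,4)] Sm_max_chain[OF assms(3,4)] by simp_all
  moreover have "xi NInf = xi1 NInf + xi2 NInf"
    using assms(1) unfolding PM_def by simp
  ultimately show ?thesis using assms(5) by linarith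
qed

lemma tight_chain_has_least_positive:
  assumes "finite P" "max_chain P C" "xiplus xi1 C = xi1 NInf" "0 < xi1 NInf"
  obtains a where "a \<in> C" "0 < xi1 (Elem a)" "\<forall>c\<in>C. c < a \<longrightarrow> xi1 (Elem c) \<le> 0"
proof -
  let ?S = "{c\<in>C. 0 < xi1 (Elem c)}"
  have "?S \<noteq> {}"
  proof
    assume "?S = {}"
    then have "xiplus xi1 C \<le> 0" unfolding xiplus_def by (intro sum_nonpos) auto
    with assms(3,4) show False by simp
  qed
  moreover have "finite ?S" using finite_max_chain[OF assms(1,2)] by simp
  ultimately obtain a where "a \<in> ?S" "\<forall>x\<in>?S. a \<le> x"
    using finite_chain_has_least[of ?S] max_chain_comparable[OF assms(2)] by blast
  then show thesis using that by (force simp: less_le_not_le)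
qed

text \<open>Otherwise the chain through b and the part of C above a would exceed the bound
  \<open>xi1 NInf\<close> on maximal chains.\<close>

lemma tight_chain_nothing_positive_below:
  assumes fin: "finite P" and S1: "Sm P 0 xi1" and mc: "max_chain P C"
    and tight: "xiplus xi1 C = xi1 NInf"
    and a: "a \<in> C" "\<forall>c\<in>C. c < a \<longrightarrow> xi1 (Elem c) \<le> 0"
    and b: "b \<in> P" "b < a"
  shows "xi1 (Elem b) \<le> 0"
proof -
  let ?U = "{c\<in>C. a \<le> c}" and ?L = "{c\<in>C. \<not> a \<le> c}"
  have fC: "finite C" using finite_max_chain[OF fin mc] .
  have "is_chain P (insert b ?U)"
    using max_chain_subset[OF mc] b unfolding is_chain_def
    by (auto dest: max_chain_comparable[OF mc] intro: order.strict_implies_order order_trans less_le_trans)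
  then obtain D where D: "max_chain P D" "insert b ?U \<subseteq> D"
    using chain_extends_to_max_chain fin by blast
  have "xiplus xi1 (insert b ?U) \<le> xiplus xi1 D"
    unfolding xiplus_def using D max_chain_subset[OF D(1)] Sm_lower_bound[OF S1]
    by (intro sum_mono2[OF finite_max_chain[OF fin D(1)]]) auto
  moreover have "xiplus xi1 (insert b ?U) = xi1 (Elem b) + xiplus xi1 ?U"
    unfolding xiplus_def using fC b(2) by (subst sum.insert) auto
  moreover have "xiplus xi1 C = xiplus xi1 ?U + xiplus xi1 ?L"
    unfolding xiplus_def using fC by (subst sum.union_disjoint[symmetric]) (auto intro: sum.cong)
  moreover have "xiplus xi1 ?L \<le> 0"
    unfolding xiplus_def using a max_chain_comparable[OF mc a(1)]
    by (intro sum_nonpos) (auto simp: less_le_not_le)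
  moreover have "xiplus xi1 D \<le> xi1 NInf" using Sm_max_chain[OF S1 D(1)] by simp
  ultimately show ?thesis using tight by linarith
qed

lemma zigzag_imp_generator:
  assumes fin: "finite P" and S: "Sm P eps xi" and Z: "zigzag P xi eps s z w C"
  shows "is_generator P eps xi"
  unfolding is_generator_def
proof (intro conjI notI)
  show "Sm P eps xi" by fact
  assume "\<exists>xi1 xi2. Sm P 0 xi1 \<and> 0 < xi1 NInf \<and> Sm P eps xi2 \<and> (\<forall>v\<in>PM P. xi v = xi1 v + xi2 v)"
  then obtain xi1 xi2 where S1: "Sm P 0 xi1" and pos: "0 < xi1 NInf" and S2: "Sm P eps xi2"
    and sum: "\<forall>v\<in>PM P. xi v = xi1 v + xi2 v"
    by blast
  note mc = zigzagD(2)[OF Z] and tight = tight_chain_of_sum[OF sum S1 S2 zigzagD(2,3)[OF Z]]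
  have "\<forall>i. \<exists>a. i \<le> s \<longrightarrow> a \<in> C i \<and> 0 < xi1 (Elem a) \<and> (\<forall>c\<in>C i. c < a \<longrightarrow> xi1 (Elem c) \<le> 0)"
    using tight_chain_has_least_positive[OF fin mc tight pos] by metis
  then obtain a where a: "\<And>i. i \<le> s \<Longrightarrow> a i \<in> C i" "\<And>i. i \<le> s \<Longrightarrow> 0 < xi1 (Elem (a i))"
    and a_least: "\<And>i. i \<le> s \<Longrightarrow> \<forall>c\<in>C i. c < a i \<longrightarrow> xi1 (Elem c) \<le> 0"
    by metis
  have a_P: "a i \<in> P" if "i \<le> s" for i using a(1)[OF that] max_chain_subset[OF mc[OF that]] by blast
  have a_not_eps: "xi (Elem (a i)) \<noteq> eps" if "i \<le> s" for i
  proof -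
    have "xi (Elem (a i)) = xi1 (Elem (a i)) + xi2 (Elem (a i))"
      using sum a_P[OF that] unfolding PM_def by blast
    then show ?thesis using a(2)[OF that] Sm_lower_bound[OF S2 a_P[OF that]] by linarith
  qed
  have a_above: "lowE w i < Elem (a i) \<and> \<not> Elem (a i) < highE z s i" if "i \<le> s" for i
    using that
  proof (induction i)
    case 0
    have "lowE w 0 < Elem (a 0)" by (simp add: lowE_def)
    then show ?case using a_not_eps[of 0] zigzagD(6)[OF Z _ a(1), of 0] by blast
  next
    case (Suc i)
    have "z i \<le> a i"
      using Suc max_chain_comparable[OF mc a(1) zigzagD(4)[OF Z], of i] by (auto simp: highE_def)
    with zigzagD(1)[OF Z, of i] Suc.prems have "w (Suc i) < a i" by simp
    moreover have "\<not> a (Suc i) < a i"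
      using tight_chain_nothing_positive_below[OF fin S1 mc tight a(1) a_least a_P] a(2) Suc.prems
      by (meson Suc_leD not_le)
    ultimately have "w (Suc i) < a (Suc i)"
      using max_chain_comparable[OF mc a(1) zigzagD(5)[OF Z], of "Suc i"] Suc.prems
      by (metis le_less less_le_trans zero_less_Suc)
    then have "lowE w (Suc i) < Elem (a (Suc i))" by (simp add: lowE_def)
    then show ?case
      using a_not_eps[of "Suc i"] zigzagD(6)[OF Z _ a(1), of "Suc i"] Suc.prems by blast
  qed
  from a_above[of s] show False by (simp add: highE_def)
qed

section \<open>Generators yield zigzags\<close>

lemma not_generator_if_antichain_meets_tight_chains:
  assumes fin: "finite P" and S: "Sm P eps xi"
    and antichain: "\<forall>a\<in>A. \<forall>b\<in>A. a \<le> b \<longrightarrow> a = b"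
    and not_eps: "\<forall>a\<in>A. xi (Elem a) \<noteq> eps"
    and meets: "\<forall>C\<in>Cxi P xi (xi NInf - eps). C \<inter> A \<noteq> {}"
  shows "\<not> is_generator P eps xi"
proof -
  define xi1 :: "'a ext \<Rightarrow> int" where
    "xi1 v = (case v of Elem a \<Rightarrow> if a \<in> A then 1 else 0 | _ \<Rightarrow> 1)" for v
  define xi2 where "xi2 v = xi v - xi1 v" for v
  have xi1_chain: "xiplus xi1 C = int (card (C \<inter> A))" if "max_chain P C" for C
    unfolding xiplus_def xi1_def using finite_max_chain[OF fin that] by (simp add: sum.If_cases)
  have card_le_1: "card (C \<inter> A) \<le> 1" if "max_chain P C" for C
    unfolding One_nat_def using antichain max_chain_comparable[OF that]
    by (subst card_le_Suc0_iff_eq[OF finite_subset[OF _ finite_max_chain[OF fin that]]]) blast+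
  have "Sm P 0 xi1"
    unfolding Sm_def using xi1_chain card_le_1 by (force simp: xi1_def)
  moreover have "Sm P eps xi2"
    unfolding Sm_def
  proof (intro conjI ballI allI impI)
    fix x assume "x \<in> P"
    then show "eps \<le> xi2 (Elem x)"
      using Sm_lower_bound[OF S] not_eps by (force simp: xi2_def xi1_def)
  next
    fix C assume mc: "max_chain P C"
    have "xiplus xi2 C = xiplus xi C - xiplus xi1 C"
      unfolding xiplus_def xi2_def by (simp add: sum_subtractf)
    moreover have "xiplus xi C = xi NInf - eps \<Longrightarrow> 1 \<le> card (C \<inter> A)"
      using meets mc finite_max_chain[OF fin mc] by (auto simp: Cxi_def Suc_le_eq card_gt_0_iff)
    ultimately show "xiplus xi2 C + eps \<le> xi2 NInf"
      using Sm_max_chain[OF S mc] xi1_chain[OF mc] by (force simp: xi2_def xi1_def)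
  qed
  moreover have "\<forall>v\<in>PM P. xi v = xi1 v + xi2 v" by (simp add: xi2_def)
  ultimately show ?thesis
    unfolding is_generator_def by (force simp: xi1_def)
qed

definition zigzag_prefix :: "('a::order) set \<Rightarrow> ('a ext \<Rightarrow> int) \<Rightarrow> int \<Rightarrow> nat \<Rightarrow> (nat \<Rightarrow> 'a)
    \<Rightarrow> (nat \<Rightarrow> 'a) \<Rightarrow> (nat \<Rightarrow> 'a set) \<Rightarrow> bool" where
  "zigzag_prefix P xi eps k y x C \<longleftrightarrow>
     (\<forall>i<k. x (Suc i) < y i) \<and> (\<forall>i. 1 \<le> i \<and> i \<le> k \<longrightarrow> x i < y i) \<and>
     (\<forall>i\<le>k. C i \<in> Cxi P xi (xi NInf - eps)) \<and>
     y 0 \<in> C 0 \<and> (\<forall>i. 1 \<le> i \<and> i \<le> k \<longrightarrow> x i \<in> C i \<and> y i \<in> C i) \<and>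
     (\<forall>i\<le>k. \<forall>c\<in>C i. lowE x i < Elem c \<and> c < y i \<longrightarrow> xi (Elem c) = eps)"

definition zigzag_top :: "('a::order) set \<Rightarrow> ('a ext \<Rightarrow> int) \<Rightarrow> int \<Rightarrow> 'a \<Rightarrow> bool" where
  "zigzag_top P xi eps a \<longleftrightarrow>
     xi (Elem a) \<noteq> eps \<and> (\<exists>k y x C. zigzag_prefix P xi eps k y x C \<and> y k = a)"

lemma Cxi_subset: "C \<in> Cxi P xi m \<Longrightarrow> C \<subseteq> P"
  unfolding Cxi_def using max_chain_subset by blast

lemma zigzag_top_start:
  assumes "C \<in> Cxi P xi (xi NInf - eps)" "a \<in> C" "xi (Elem a) \<noteq> eps"
    and "\<forall>c\<in>C. c < a \<longrightarrow> xi (Elem c) = eps"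
  shows "zigzag_top P xi eps a"
  unfolding zigzag_top_def zigzag_prefix_def
  using assms by (intro conjI exI[of _ 0] exI[of _ "\<lambda>_. a"] exI[of _ "\<lambda>_. C"]) (auto simp: lowE_def)

lemma zigzag_top_step:
  assumes r: "zigzag_top P xi eps r"
    and C: "C \<in> Cxi P xi (xi NInf - eps)" "w \<in> C" "w < r" "a \<in> C" "w < a" "xi (Elem a) \<noteq> eps"
    and eps: "\<forall>c\<in>C. w < c \<and> c < a \<longrightarrow> xi (Elem c) = eps"
  shows "zigzag_top P xi eps a"
proof -
  obtain k y x Cs where pre: "zigzag_prefix P xi eps k y x Cs" "y k = r"
    using r unfolding zigzag_top_def by blast
  have "zigzag_prefix P xi eps (Suc k) (y(Suc k := a)) (x(Suc k := w)) (Cs(Suc k := C))"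
    using pre C eps unfolding zigzag_prefix_def by (auto simp: lowE_def less_Suc_eq le_Suc_eq)
  then show ?thesis
    unfolding zigzag_top_def using C(6) by (metis fun_upd_same)
qed

lemma zigzag_all_eps:
  "C \<in> Cxi P xi (xi NInf - eps) \<Longrightarrow> \<forall>c\<in>C. xi (Elem c) = eps \<Longrightarrow> zigzag P xi eps 0 z w (\<lambda>_. C)"
  unfolding zigzag_def by auto

lemma zigzag_from_top:
  assumes r: "zigzag_top P xi eps r"
    and C: "C \<in> Cxi P xi (xi NInf - eps)" "w \<in> C" "w < r"
    and eps: "\<forall>c\<in>C. w < c \<longrightarrow> xi (Elem c) = eps"
  shows "\<exists>s z w C. zigzag P xi eps s z w C"
proof -
  obtain k y x Cs where pre: "zigzag_prefix P xi eps k y x Cs" "y k = r"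
    using r unfolding zigzag_top_def by blast
  have "y i \<in> P" if "i \<le> k" for i
    using pre(1) that unfolding zigzag_prefix_def
    by (metis Cxi_subset le_eq_less_or_eq le_numeral_extra(1) less_one not_le subsetD)
  moreover have "x (Suc i) \<in> P" if "i < k" for i
  proof -
    have "x (Suc i) \<in> Cs (Suc i)" "Cs (Suc i) \<in> Cxi P xi (xi NInf - eps)"
      using pre(1) that unfolding zigzag_prefix_def by auto
    then show ?thesis using Cxi_subset by blast
  qed
  moreover have "w \<in> P" using C Cxi_subset by blast
  ultimately have "zigzag P xi eps (Suc k) y (x(Suc k := w)) (Cs(Suc k := C))"
    using pre C eps unfolding zigzag_prefix_def zigzag_def
    by (auto simp: lowE_def highE_def less_Suc_eq le_Suc_eq)
  then show ?thesis by blast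
qed

text \<open>Walking up C, the least non-\<open>eps\<close> element above the highest element of C lying below
  some top is again a top; it is maximal, since a larger top would push that highest element up.\<close>

lemma tight_chain_has_maximal_top:
  assumes fin: "finite P" and no_zigzag: "\<nexists>s z w C. zigzag P xi eps s z w C"
    and C: "C \<in> Cxi P xi (xi NInf - eps)"
  obtains a where "a \<in> C" "zigzag_top P xi eps a" "\<nexists>r. zigzag_top P xi eps r \<and> a < r"
proof -
  have mc: "max_chain P C" using C unfolding Cxi_def by auto
  have fC: "finite C" using finite_max_chain[OF fin mc] .
  have cmp: "\<forall>a\<in>S. \<forall>b\<in>S. a \<le> b \<or> b \<le> a" if "S \<subseteq> C" for S
    using that max_chain_comparable[OF mc] by blast
  let ?W = "{w\<in>C. \<exists>r. zigzag_top P xi eps r \<and> w < r}"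
  show thesis
  proof (cases "?W = {}")
    case True
    let ?U = "{c\<in>C. xi (Elem c) \<noteq> eps}"
    have "?U \<noteq> {}" using zigzag_all_eps[OF C] no_zigzag by blast
    then obtain a where a: "a \<in> ?U" "\<forall>x\<in>?U. a \<le> x"
      using finite_chain_has_least[of ?U] fC cmp[of ?U] by auto
    have "zigzag_top P xi eps a"
      by (rule zigzag_top_start[OF C]) (use a in \<open>auto dest: leD\<close>)
    with True a show thesis using that by auto
  next
    case False
    then obtain w where w: "w \<in> ?W" "\<forall>x\<in>?W. x \<le> w"
      using finite_chain_has_greatest[of ?W] fC cmp[of ?W] by auto
    then obtain r where r: "zigzag_top P xi eps r" "w < r" by auto
    let ?U = "{c\<in>C. w < c \<and> xi (Elem c) \<noteq> eps}"
    have "?U \<noteq> {}" using zigzag_from_top[OF r(1) C _ r(2)] w no_zigzag by blast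
    then obtain a where a: "a \<in> ?U" "\<forall>x\<in>?U. a \<le> x"
      using finite_chain_has_least[of ?U] fC cmp[of ?U] by auto
    have "zigzag_top P xi eps a"
      by (rule zigzag_top_step[OF r(1) C _ r(2)]) (use a w in \<open>auto dest: leD\<close>)
    moreover have "\<nexists>r. zigzag_top P xi eps r \<and> a < r"
      using a w by (auto dest: leD)
    ultimately show thesis using that a by blast
  qed
qed

lemma generator_imp_zigzag:
  assumes fin: "finite P" and S: "Sm P eps xi" and gen: "is_generator P eps xi"
  shows "\<exists>s z w C. zigzag P xi eps s z w C"
proof (rule ccontr)
  assume no_zigzag: "\<nexists>s z w C. zigzag P xi eps s z w C"
  let ?A = "{a. zigzag_top P xi eps a \<and> (\<nexists>r. zigzag_top P xi eps r \<and> a < r)}"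
  have "\<forall>a\<in>?A. \<forall>b\<in>?A. a \<le> b \<longrightarrow> a = b" by (auto simp: le_less)
  moreover have "\<forall>a\<in>?A. xi (Elem a) \<noteq> eps" by (simp add: zigzag_top_def)
  moreover have "\<forall>C\<in>Cxi P xi (xi NInf - eps). C \<inter> ?A \<noteq> {}"
    using tight_chain_has_maximal_top[OF fin no_zigzag] by blast
  ultimately show False
    using not_generator_if_antichain_meets_tight_chains[OF fin S] gen by blast
qed

section \<open>Saturated chains and \<open>qdist\<close>\<close>

lemma exists_last_before_change: "Q 0 \<Longrightarrow> \<not> Q n \<Longrightarrow> \<exists>k<n. Q k \<and> \<not> Q (Suc k)"
  by (induction n) (auto simp: less_Suc_eq)

lemma covers_less: "covers P a b \<Longrightarrow> a < b"
  unfolding covers_def by simp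

lemma covers_PE: "covers P a b \<Longrightarrow> a \<in> PE P \<and> b \<in> PE P"
  unfolding covers_def by simp

lemma covers_sorted:
  assumes "length zs = Suc t" "\<forall>i<t. covers P (zs ! i) (zs ! Suc i)"
  shows "sorted_wrt (<) zs"
  using assms covers_less by (subst sorted_wrt_iff_nth_Suc_transp) auto

lemma PE_mono: "C \<subseteq> P \<Longrightarrow> PE C \<subseteq> PE P"
  unfolding PE_def by auto

lemma finite_PE: "finite P \<Longrightarrow> finite (PE P)"
  unfolding PE_def by simp

lemma card_PE: "finite P \<Longrightarrow> card (PE P) \<le> card P + 2"
  using card_Un_le[of "{NInf, PInf}" "Elem ` P"] card_image_le[of P Elem] unfolding PE_def by simp

lemma satchain_length_bound:
  assumes "finite P" "satchain P a b t"
  shows "t \<le> card P + 1"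
proof -
  obtain zs where zs: "length zs = Suc t" and cov: "\<forall>i<t. covers P (zs ! i) (zs ! Suc i)"
    using assms(2) unfolding satchain_def by blast
  show ?thesis
  proof (cases t)
    case (Suc n)
    have "distinct zs"
      using covers_sorted[OF zs cov] by (induction zs) auto
    then have "card (set zs) = Suc t" using zs distinct_card by metis
    moreover have "set zs \<subseteq> PE P"
    proof
      fix v assume "v \<in> set zs"
      then obtain i where "i \<le> t" "v = zs ! i" using zs by (metis in_set_conv_nth less_Suc_eq_le)
      show "v \<in> PE P"
      proof (cases "i < t")
        case True
        then show ?thesis using cov covers_PE \<open>v = zs ! i\<close> by blast
      next
        case False
        then have "covers P (zs ! n) (zs ! i)" using cov Suc \<open>i \<le> t\<close> by simp
        then show ?thesis using covers_PE \<open>v = zs ! i\<close> by blast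
      qed
    qed
    then have "card (set zs) \<le> card (PE P)"
      by (rule card_mono[OF finite_PE[OF assms(1)]])
    ultimately show ?thesis using card_PE[OF assms(1)] by simp
  qed simp
qed

lemma finite_satchain_values:
  assumes "finite P" shows "finite {eps * int t | t. satchain P a b t}"
proof -
  have "{eps * int t | t. satchain P a b t} \<subseteq> (\<lambda>t. eps * int t) ` {..card P + 1}"
    using satchain_length_bound[OF assms] by auto
  then show ?thesis using finite_subset by blast
qed

lemma qdist_ge: "finite P \<Longrightarrow> satchain P a b t \<Longrightarrow> eps * int t \<le> qdist P eps a b"
  unfolding qdist_def by (rule Max_ge[OF finite_satchain_values]) auto

lemma qdist_attained:
  assumes "finite P" "satchain P a b t"
  obtains t' where "satchain P a b t'" "qdist P eps a b = eps * int t'"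
proof -
  have "qdist P eps a b \<in> {eps * int t | t. satchain P a b t}"
    unfolding qdist_def using assms by (intro Max_in[OF finite_satchain_values]) auto
  then show thesis using that by blast
qed

lemma satchain_Cons: "covers P a c \<Longrightarrow> satchain P c b t \<Longrightarrow> satchain P a b (Suc t)"
  unfolding satchain_def
proof (elim exE conjE)
  fix zs assume "covers P a c" "length zs = Suc t" "zs ! 0 = c" "zs ! t = b"
    "\<forall>i<t. covers P (zs ! i) (zs ! Suc i)"
  then show "\<exists>zs. length zs = Suc (Suc t) \<and> zs ! 0 = a \<and> zs ! Suc t = b \<and>
      (\<forall>i<Suc t. covers P (zs ! i) (zs ! Suc i))"
    by (intro exI[of _ "a # zs"]) (auto simp: nth_Cons split: nat.split)
qed

lemma satchain_single: "covers P a b \<Longrightarrow> satchain P a b 1"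
  unfolding satchain_def by (intro exI[of _ "[a, b]"]) auto

lemma max_chain_below_incomparable:
  "max_chain P C \<Longrightarrow> x \<in> C \<Longrightarrow> c \<in> C \<Longrightarrow> x < p \<Longrightarrow> \<not> c \<le> p \<Longrightarrow> x < c"
  by (metis max_chain_comparable order.order_iff_strict order.strict_trans1 order.trans)

lemma max_chain_above_incomparable:
  "max_chain P C \<Longrightarrow> x \<in> C \<Longrightarrow> c \<in> C \<Longrightarrow> p < x \<Longrightarrow> \<not> p \<le> c \<Longrightarrow> c < x"
  by (metis max_chain_comparable order.order_iff_strict order.strict_trans2 order.trans)

definition chain_interval :: "('a::order) set \<Rightarrow> 'a ext \<Rightarrow> 'a ext \<Rightarrow> 'a set" where
  "chain_interval C a b = {c\<in>C. a < Elem c \<and> Elem c < b}"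

lemma covers_if_chain_interval_empty:
  assumes mc: "max_chain P C" and ab: "a \<in> PE C" "b \<in> PE C" "a < b"
    and empty: "chain_interval C a b = {}"
  shows "covers P a b"
  unfolding covers_def lessE_eq_less
proof (intro conjI notI)
  show "a \<in> PE P" "b \<in> PE P" "a < b" using ab PE_mono[OF max_chain_subset[OF mc]] by auto
  assume "\<exists>v\<in>PE P. a < v \<and> v < b"
  then obtain p where p: "p \<in> P" "a < Elem p" "Elem p < b"
    unfolding PE_def by auto
  then have "p \<notin> C" using empty unfolding chain_interval_def by blast
  then obtain c where c: "c \<in> C" "\<not> (c \<le> p \<or> p \<le> c)"
    using max_chain_memI[OF mc p(1)] by blast
  have "a < Elem c"
    using ab(1,3) p(2) c max_chain_below_incomparable[OF mc _ c(1)] unfolding PE_def by auto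
  moreover have "Elem c < b"
    using ab(2,3) p(3) c max_chain_above_incomparable[OF mc _ c(1)] unfolding PE_def by auto
  ultimately show False using c(1) empty unfolding chain_interval_def by blast
qed

lemma satchain_along_max_chain:
  assumes fin: "finite P" and mc: "max_chain P C"
  shows "a \<in> PE C \<Longrightarrow> b \<in> PE C \<Longrightarrow> a < b \<Longrightarrow> satchain P a b (Suc (card (chain_interval C a b)))"
proof (induction "card (chain_interval C a b)" arbitrary: a)
  case 0
  have "finite (chain_interval C a b)"
    using finite_max_chain[OF fin mc] unfolding chain_interval_def by simp
  with 0 have "chain_interval C a b = {}" by simp
  with 0 show ?case
    using covers_if_chain_interval_empty[OF mc] satchain_single by fastforce
next
  case (Suc n a)
  let ?I = "chain_interval C a b"
  have "finite ?I" using finite_max_chain[OF fin mc] unfolding chain_interval_def by simp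
  moreover have "?I \<noteq> {}" using Suc(2) by auto
  ultimately obtain c where c: "c \<in> ?I" "\<forall>x\<in>?I. c \<le> x"
    using finite_chain_has_least[of ?I] max_chain_comparable[OF mc]
    unfolding chain_interval_def by blast
  have cC: "c \<in> C" "a < Elem c" "Elem c < b" using c(1) unfolding chain_interval_def by auto
  have "chain_interval C (Elem c) b = ?I - {c}"
    using c cC unfolding chain_interval_def by (auto simp: le_less intro: less_trans[OF cC(2)])
  then have "n = card (chain_interval C (Elem c) b)"
    using Suc(2) c(1) \<open>finite ?I\<close> by simp
  moreover have "Elem c \<in> PE C" unfolding PE_def using cC by simp
  ultimately have "satchain P (Elem c) b (Suc n)"
    using Suc(1) Suc(4) cC(3) by simp
  moreover have "chain_interval C a (Elem c) = {}"
  proof -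
    have "x \<notin> C" if "a < Elem x" "x < c" for x
      using c(2) that less_trans[OF _ cC(3), of "Elem x"] unfolding chain_interval_def
      by (auto dest: leD)
    then show ?thesis unfolding chain_interval_def by auto
  qed
  then have "covers P a (Elem c)"
    using covers_if_chain_interval_empty[OF mc Suc(3) \<open>Elem c \<in> PE C\<close> cC(2)] by simp
  ultimately show ?case using satchain_Cons Suc(2) by metis
qed

lemma satchain_exists:
  assumes fin: "finite P" and ab: "a \<in> PE P" "b \<in> PE P" "a < b"
  obtains t where "satchain P a b t"
proof -
  let ?D = "{p\<in>P. Elem p = a \<or> Elem p = b}"
  have "is_chain P ?D" unfolding is_chain_def using ab(3) by (auto simp: order_le_less)
  then obtain C where C: "max_chain P C" "?D \<subseteq> C" using chain_extends_to_max_chain[OF fin] by blast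
  then have "a \<in> PE C" "b \<in> PE C" using ab unfolding PE_def by auto
  then show thesis using satchain_along_max_chain[OF fin C(1)] ab(3) that by blast
qed

context
  fixes P :: "('a::order) set" and zs :: "'a ext list" and t :: nat
  assumes len: "length zs = Suc t" and cov: "\<forall>i<t. covers P (zs ! i) (zs ! Suc i)"
begin

lemma covers_list_nth_less: "i < j \<Longrightarrow> j \<le> t \<Longrightarrow> zs ! i < zs ! j"
  using sorted_wrt_nth_less[OF covers_sorted[OF len cov]] len by simp

lemma covers_list_le: "i \<le> j \<Longrightarrow> j \<le> t \<Longrightarrow> zs ! i \<le> zs ! j"
  using covers_list_nth_less[of i j] by (cases "i = j") auto

lemma covers_list_bounds: "v \<in> set zs \<Longrightarrow> zs ! 0 \<le> v \<and> v \<le> zs ! t"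
  using covers_list_le len by (auto simp: in_set_conv_nth less_Suc_eq_le)

lemma covers_list_PE: "0 < t \<Longrightarrow> set zs \<subseteq> PE P"
proof
  fix v assume "0 < t" "v \<in> set zs"
  then obtain i where i: "i \<le> t" "v = zs ! i" using len by (metis in_set_conv_nth less_Suc_eq_le)
  show "v \<in> PE P"
  proof (cases "i < t")
    case True
    then show ?thesis using cov covers_PE i(2) by blast
  next
    case False
    with i(1) \<open>0 < t\<close> obtain n where "t = Suc n" "i = Suc n" by (metis gr0_implies_Suc le_neq_implies_less)
    then have "covers P (zs ! n) (zs ! i)" using cov by simp
    then show ?thesis using covers_PE i(2) by blast
  qed
qed

lemma covers_list_interior_card: "card {v\<in>set zs. zs ! 0 < v \<and> v < zs ! t} = t - 1"
proof -
  have "{v\<in>set zs. zs ! 0 < v \<and> v < zs ! t} = (!) zs ` {1..<t}"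
  proof (intro equalityI subsetI)
    fix v assume "v \<in> {v\<in>set zs. zs ! 0 < v \<and> v < zs ! t}"
    then obtain i where "i \<le> t" "v = zs ! i" "zs ! 0 < v" "v < zs ! t"
      using len by (auto simp: in_set_conv_nth less_Suc_eq_le)
    then have "i \<in> {1..<t}" by (cases "i = 0"; cases "i = t") auto
    then show "v \<in> (!) zs ` {1..<t}" using \<open>v = zs ! i\<close> by blast
  next
    fix v assume "v \<in> (!) zs ` {1..<t}"
    then obtain i where "i \<in> {1..<t}" "v = zs ! i" by blast
    then show "v \<in> {v\<in>set zs. zs ! 0 < v \<and> v < zs ! t}"
      using covers_list_nth_less[of 0 i] covers_list_nth_less[of i t] len by auto
  qed
  moreover have "inj_on ((!) zs) {1..<t}"
  proof (rule inj_onI)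
    fix i j assume "i \<in> {1..<t}" "j \<in> {1..<t}" "zs ! i = zs ! j"
    then show "i = j"
      using covers_list_nth_less[of i j] covers_list_nth_less[of j i] by (cases i j rule: linorder_cases) auto
  qed
  ultimately show ?thesis by (simp add: card_image)
qed

lemma covers_list_comparable: "u \<in> set zs \<Longrightarrow> v \<in> set zs \<Longrightarrow> u \<le> v \<or> v \<le> u"
  using covers_list_le[of _ _] len nat_le_linear by (metis in_set_conv_nth less_Suc_eq_le)

text \<open>A point strictly between the ends and comparable with the whole list would refine
  the covering step just below it.\<close>

lemma covers_list_absorbs:
  assumes v: "v \<in> PE P" "zs ! 0 < v" "v < zs ! t" and cmp: "\<forall>u\<in>set zs. u \<le> v \<or> v \<le> u"
  shows "v \<in> set zs"
proof -
  obtain k where k: "k < t" "zs ! k < v" "\<not> zs ! Suc k < v"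
    using exists_last_before_change[of "\<lambda>i. zs ! i < v" t] v(2,3) by (auto dest: order.asym)
  have "zs ! Suc k \<in> set zs" using k(1) len by simp
  then have "v \<le> zs ! Suc k" using cmp k(3) by (metis le_less)
  moreover have "\<not> v < zs ! Suc k"
    using cov k(1,2) v(1) unfolding covers_def by auto
  ultimately show ?thesis using \<open>zs ! Suc k \<in> set zs\<close> by (simp add: le_less)
qed

end

section \<open>Splicing maximal chains\<close>

definition chain_below :: "('a::order) set \<Rightarrow> 'a ext \<Rightarrow> 'a set" where
  "chain_below C a = {c\<in>C. Elem c \<le> a}"

definition chain_above :: "('a::order) set \<Rightarrow> 'a ext \<Rightarrow> 'a set" where
  "chain_above C b = {c\<in>C. b \<le> Elem c}"

lemma max_chain_PE_comparable:
  "max_chain P C \<Longrightarrow> c \<in> C \<Longrightarrow> a \<in> PE C \<Longrightarrow> Elem c \<le> a \<or> a \<le> Elem c"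
  unfolding PE_def by (auto dest: max_chain_comparable)

lemma xiplus_chain_split:
  assumes fin: "finite P" and mc: "max_chain P C" and ab: "a \<in> PE C" "b \<in> PE C" "a < b"
  shows "xiplus f C = xiplus f (chain_below C a) + xiplus f (chain_interval C a b) + xiplus f (chain_above C b)"
proof -
  have "C = chain_below C a \<union> chain_interval C a b \<union> chain_above C b"
    using max_chain_PE_comparable[OF mc _ ab(1)] max_chain_PE_comparable[OF mc _ ab(2)]
    unfolding chain_below_def chain_interval_def chain_above_def by (auto simp: le_less)
  moreover have "chain_below C a \<inter> chain_interval C a b = {}"
    unfolding chain_below_def chain_interval_def by (auto dest: leD)
  moreover have "(chain_below C a \<union> chain_interval C a b) \<inter> chain_above C b = {}"
    using ab(3) unfolding chain_below_def chain_interval_def chain_above_def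
    by (auto dest: order.strict_trans1 order.strict_trans2 leD)
  moreover have "finite C" using finite_max_chain[OF fin mc] .
  ultimately show ?thesis
    unfolding xiplus_def
    by (metis (no_types, lifting) finite_Un sum.union_disjoint)
qed

lemma comparable_Un:
  assumes "\<forall>x\<in>U. \<forall>y\<in>U. x \<le> y \<or> y \<le> x" "\<forall>x\<in>V. \<forall>y\<in>V. x \<le> y \<or> y \<le> x"
    and "\<forall>u\<in>U. \<forall>v\<in>V. u \<le> v"
  shows "\<forall>x\<in>U \<union> V. \<forall>y\<in>U \<union> V. x \<le> y \<or> y \<le> (x::'a::order)"
  using assms by blast

lemma max_chain_memI_below:
  assumes "max_chain P C" "a \<in> C" "x \<in> P" "x \<le> a" "\<forall>c\<in>C. c \<le> a \<longrightarrow> c \<le> x \<or> x \<le> c"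
  shows "x \<in> C"
proof (rule max_chain_memI[OF assms(1,3)], intro ballI)
  fix c assume "c \<in> C"
  then show "c \<le> x \<or> x \<le> c"
    using assms(4,5) max_chain_comparable[OF assms(1,2)] order_trans by metis
qed

lemma max_chain_memI_above:
  assumes "max_chain P C" "b \<in> C" "x \<in> P" "b \<le> x" "\<forall>c\<in>C. b \<le> c \<longrightarrow> c \<le> x \<or> x \<le> c"
  shows "x \<in> C"
proof (rule max_chain_memI[OF assms(1,3)], intro ballI)
  fix c assume "c \<in> C"
  then show "c \<le> x \<or> x \<le> c"
    using assms(4,5) max_chain_comparable[OF assms(1,2)] order_trans by metis
qed

definition spliced_chain :: "('a::order) set \<Rightarrow> 'a ext \<Rightarrow> 'a ext list \<Rightarrow> 'a set \<Rightarrow> 'a ext \<Rightarrow> 'a set" where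
  "spliced_chain C a zs D b = chain_below C a \<union> {p. Elem p \<in> set zs} \<union> chain_above D b"

context
  fixes P C D :: "('a::order) set" and a b :: "'a ext" and zs :: "'a ext list" and t :: nat
  assumes mcC: "max_chain P C" and mcD: "max_chain P D"
    and ab: "a \<in> PE C" "b \<in> PE D" "a < b"
    and len: "length zs = Suc t" and ends: "zs ! 0 = a" "zs ! t = b"
    and cov: "\<forall>i<t. covers P (zs ! i) (zs ! Suc i)"
begin

lemma spliced_list_bounds: "v \<in> set zs \<Longrightarrow> a \<le> v \<and> v \<le> b"
  using covers_list_bounds[OF len cov] ends by simp

lemma spliced_list_in_P: "Elem p \<in> set zs \<Longrightarrow> p \<in> P"
proof -
  have "0 < t" using ab(3) ends by (metis gr0I less_irrefl)
  then show "Elem p \<in> set zs \<Longrightarrow> p \<in> P"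
    using covers_list_PE[OF len cov] unfolding PE_def by auto
qed

lemma spliced_chain_cases:
  assumes "u \<in> spliced_chain C a zs D b"
  obtains "u \<in> C" "Elem u \<le> a" | "Elem u \<in> set zs" | "u \<in> D" "b \<le> Elem u"
  using assms unfolding spliced_chain_def chain_below_def chain_above_def by blast

lemma spliced_chain_below: "chain_below (spliced_chain C a zs D b) a = chain_below C a"
proof (intro equalityI subsetI)
  fix u assume "u \<in> chain_below (spliced_chain C a zs D b) a"
  then have u: "u \<in> spliced_chain C a zs D b" and le: "Elem u \<le> a"
    unfolding chain_below_def by auto
  from u show "u \<in> chain_below C a"
  proof (cases rule: spliced_chain_cases)
    case 2
    then have "Elem u = a" using spliced_list_bounds[OF 2] order.antisym[OF le] by blast
    then have "u \<in> C" using ab(1) unfolding PE_def by auto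
    then show ?thesis using le unfolding chain_below_def by blast
  next
    case 3
    then show ?thesis using ab(3) order_trans[OF 3(2) le] by (simp add: less_le_not_le)
  qed (simp add: chain_below_def)
qed (simp add: spliced_chain_def chain_below_def)

lemma spliced_chain_above: "chain_above (spliced_chain C a zs D b) b = chain_above D b"
proof (intro equalityI subsetI)
  fix u assume "u \<in> chain_above (spliced_chain C a zs D b) b"
  then have u: "u \<in> spliced_chain C a zs D b" and le: "b \<le> Elem u"
    unfolding chain_above_def by auto
  from u show "u \<in> chain_above D b"
  proof (cases rule: spliced_chain_cases)
    case 1
    then show ?thesis using ab(3) order_trans[OF le 1(2)] by (simp add: less_le_not_le)
  next
    case 2
    then have "Elem u = b" using spliced_list_bounds[OF 2] order.antisym[OF _ le] by blast
    then have "u \<in> D" using ab(2) unfolding PE_def by auto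
    then show ?thesis using le unfolding chain_above_def by blast
  qed (simp add: chain_above_def)
qed (simp add: spliced_chain_def chain_above_def)

lemma spliced_chain_interval_card: "card (chain_interval (spliced_chain C a zs D b) a b) = t - 1"
proof -
  have "Elem ` chain_interval (spliced_chain C a zs D b) a b = {v\<in>set zs. a < v \<and> v < b}"
  proof (intro equalityI subsetI)
    fix v assume "v \<in> Elem ` chain_interval (spliced_chain C a zs D b) a b"
    then obtain u where v: "v = Elem u" "u \<in> spliced_chain C a zs D b" "a < Elem u" "Elem u < b"
      unfolding chain_interval_def by blast
    from v(2) have "Elem u \<in> set zs"
      by (cases rule: spliced_chain_cases) (use v(3,4) in \<open>auto dest: leD\<close>)
    with v show "v \<in> {v\<in>set zs. a < v \<and> v < b}" by blast
  next
    fix v assume v: "v \<in> {v\<in>set zs. a < v \<and> v < b}"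
    then obtain p where "v = Elem p" by (cases v) auto
    with v show "v \<in> Elem ` chain_interval (spliced_chain C a zs D b) a b"
      unfolding chain_interval_def spliced_chain_def by auto
  qed
  then have "card (chain_interval (spliced_chain C a zs D b) a b) = card {v\<in>set zs. a < v \<and> v < b}"
    by (metis card_image ext.inject inj_onI)
  then show ?thesis using covers_list_interior_card[OF len cov] ends by simp
qed

lemma spliced_chain_PE: "a \<in> PE (spliced_chain C a zs D b)" "b \<in> PE (spliced_chain C a zs D b)"
  using ab unfolding PE_def spliced_chain_def chain_below_def chain_above_def by auto

lemma spliced_chain_is_chain: "is_chain P (spliced_chain C a zs D b)"
proof -
  let ?B = "chain_below C a" and ?Z = "{p. Elem p \<in> set zs}" and ?A = "chain_above D b"
  have B: "\<forall>x\<in>?B. \<forall>y\<in>?B. x \<le> y \<or> y \<le> x" and A: "\<forall>x\<in>?A. \<forall>y\<in>?A. x \<le> y \<or> y \<le> x"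
    using max_chain_comparable[OF mcC] max_chain_comparable[OF mcD]
    unfolding chain_below_def chain_above_def by blast+
  have Z: "\<forall>x\<in>?Z. \<forall>y\<in>?Z. x \<le> y \<or> y \<le> x"
  proof (intro ballI)
    fix x y assume "x \<in> ?Z" "y \<in> ?Z"
    then show "x \<le> y \<or> y \<le> x" using covers_list_comparable[OF len cov, of "Elem x" "Elem y"] by simp
  qed
  have BZ: "\<forall>u\<in>?B. \<forall>v\<in>?Z. u \<le> v"
  proof (intro ballI)
    fix u v assume "u \<in> ?B" "v \<in> ?Z"
    then have "Elem u \<le> a" "a \<le> Elem v" using spliced_list_bounds unfolding chain_below_def by auto
    then show "u \<le> v" using order_trans[of "Elem u" a "Elem v"] by simp
  qed
  have BZA: "\<forall>u\<in>?B \<union> ?Z. \<forall>v\<in>?A. u \<le> v"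
  proof (intro ballI)
    fix u v assume "u \<in> ?B \<union> ?Z" "v \<in> ?A"
    then have "Elem u \<le> b" "b \<le> Elem v"
      using spliced_list_bounds ab(3) unfolding chain_below_def chain_above_def by (auto dest: order.strict_implies_order)
    then show "u \<le> v" using order_trans[of "Elem u" b "Elem v"] by simp
  qed
  have "spliced_chain C a zs D b \<subseteq> P"
    using max_chain_subset[OF mcC] max_chain_subset[OF mcD] spliced_list_in_P
    unfolding spliced_chain_def chain_below_def chain_above_def by blast
  then show ?thesis
    using comparable_Un[OF comparable_Un[OF B Z BZ] A BZA]
    unfolding is_chain_def spliced_chain_def by (intro conjI)
qed

lemma spliced_chain_absorbs:
  assumes xP: "x \<in> P" and cmp: "\<forall>y\<in>spliced_chain C a zs D b. x \<le> y \<or> y \<le> x"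
  shows "x \<in> spliced_chain C a zs D b"
proof -
  have cmp_a: "Elem x \<le> a \<or> a \<le> Elem x"
  proof (cases a)
    case (Elem a')
    with ab(1) have "a' \<in> spliced_chain C a zs D b"
      unfolding PE_def spliced_chain_def chain_below_def by auto
    with cmp Elem show ?thesis by auto
  qed simp_all
  have cmp_b: "Elem x \<le> b \<or> b \<le> Elem x"
  proof (cases b)
    case (Elem b')
    with ab(2) have "b' \<in> spliced_chain C a zs D b"
      unfolding PE_def spliced_chain_def chain_above_def by auto
    with cmp Elem show ?thesis by auto
  qed simp_all
  consider "Elem x \<le> a" | "b \<le> Elem x" | "a < Elem x" "Elem x < b"
    using cmp_a cmp_b by (auto simp: le_less)
  then show ?thesis
  proof cases
    case 1
    then obtain a' where a': "a = Elem a'" "a' \<in> C" "x \<le> a'"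
      using ab unfolding PE_def by (cases a) auto
    have "\<forall>c\<in>C. c \<le> a' \<longrightarrow> c \<le> x \<or> x \<le> c"
      using cmp a'(1) unfolding spliced_chain_def chain_below_def by auto
    then have "x \<in> C" by (rule max_chain_memI_below[OF mcC a'(2) xP a'(3)])
    with 1 show ?thesis unfolding spliced_chain_def chain_below_def by blast
  next
    case 2
    then obtain b' where b': "b = Elem b'" "b' \<in> D" "b' \<le> x"
      using ab unfolding PE_def by (cases b) auto
    have "\<forall>c\<in>D. b' \<le> c \<longrightarrow> c \<le> x \<or> x \<le> c"
      using cmp b'(1) unfolding spliced_chain_def chain_above_def by auto
    then have "x \<in> D" by (rule max_chain_memI_above[OF mcD b'(2) xP b'(3)])
    with 2 show ?thesis unfolding spliced_chain_def chain_above_def by blast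
  next
    case 3
    have "\<forall>u\<in>set zs. u \<le> Elem x \<or> Elem x \<le> u"
    proof
      fix u assume u: "u \<in> set zs"
      show "u \<le> Elem x \<or> Elem x \<le> u"
      proof (cases u)
        case (Elem p)
        with u have "p \<in> spliced_chain C a zs D b" unfolding spliced_chain_def by blast
        with cmp Elem show ?thesis by auto
      qed simp_all
    qed
    moreover have "Elem x \<in> PE P" using xP unfolding PE_def by simp
    ultimately have "Elem x \<in> set zs"
      using covers_list_absorbs[OF len cov] 3 ends by simp
    then show ?thesis unfolding spliced_chain_def by blast
  qed
qed

lemma spliced_chain_max: "max_chain P (spliced_chain C a zs D b)"
  unfolding max_chain_def
proof (intro conjI allI impI)
  show "is_chain P (spliced_chain C a zs D b)" by (rule spliced_chain_is_chain)
  fix E assume E: "is_chain P E \<and> spliced_chain C a zs D b \<subseteq> E"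
  show "E = spliced_chain C a zs D b"
  proof (intro equalityI subsetI)
    fix x assume "x \<in> E"
    then have "x \<in> P" "\<forall>y\<in>spliced_chain C a zs D b. x \<le> y \<or> y \<le> x"
      using E unfolding is_chain_def by blast+
    then show "x \<in> spliced_chain C a zs D b" by (rule spliced_chain_absorbs)
  qed (use E in blast)
qed

end

lemma qdist_realized_by_max_chain:
  assumes fin: "finite P" and mcC: "max_chain P C" and mcD: "max_chain P D"
    and ab: "a \<in> PE C" "b \<in> PE D" "a < b"
  obtains C' where "max_chain P C'" "a \<in> PE C'" "b \<in> PE C'"
    "chain_below C' a = chain_below C a" "chain_above C' b = chain_above D b"
    "qdist P m a b = m * (int (card (chain_interval C' a b)) + 1)"
proof -
  have "a \<in> PE P" "b \<in> PE P"
    using ab PE_mono[OF max_chain_subset[OF mcC]] PE_mono[OF max_chain_subset[OF mcD]] by auto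
  then obtain t0 where "satchain P a b t0" using satchain_exists[OF fin _ _ ab(3)] by blast
  then obtain t where "satchain P a b t" and qd: "qdist P m a b = m * int t"
    using qdist_attained[OF fin] by blast
  then obtain zs where zs: "length zs = Suc t" "zs ! 0 = a" "zs ! t = b"
    and cov: "\<forall>i<t. covers P (zs ! i) (zs ! Suc i)"
    unfolding satchain_def by blast
  have "0 < t" using zs ab(3) by (metis gr0I less_irrefl)
  note facts = spliced_chain_max spliced_chain_PE spliced_chain_below spliced_chain_above
    spliced_chain_interval_card
  from facts[OF mcC mcD ab zs cov] qd \<open>0 < t\<close> show thesis
    by (intro that[of "spliced_chain C a zs D b"]) (simp_all add: of_nat_diff)
qed

lemma xiplus_le_qdist:
  assumes fin: "finite P" and mc: "max_chain P C" and ab: "a \<in> PE C" "b \<in> PE C" "a < b"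
    and const: "\<forall>c\<in>chain_interval C a b. xi (Elem c) = m"
  shows "xiplus xi C \<le> xiplus xi (chain_below C a) + qdist P m a b - m + xiplus xi (chain_above C b)"
proof -
  have "xiplus xi (chain_interval C a b) = m * int (card (chain_interval C a b))"
    unfolding xiplus_def using const by simp
  moreover have "m * int (Suc (card (chain_interval C a b))) \<le> qdist P m a b"
    using qdist_ge[OF fin satchain_along_max_chain[OF fin mc ab]] .
  ultimately show ?thesis
    using xiplus_chain_split[OF fin mc ab, of xi] by (simp add: algebra_simps)
qed

lemma sum_eq_card_lower_bound:
  fixes f :: "'a \<Rightarrow> int"
  assumes "finite S" "\<forall>c\<in>S. m \<le> f c" "sum f S = m * int (card S)"
  shows "\<forall>c\<in>S. f c = m"
proof -
  have "(\<Sum>c\<in>S. f c - m) = 0" using assms(3) by (simp add: sum_subtractf)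
  then show ?thesis using sum_nonneg_eq_0_iff[OF assms(1), of "\<lambda>c. f c - m"] assms(2) by auto
qed

lemma qdist_splice:
  assumes fin: "finite P" and lb: "\<forall>p\<in>P. m \<le> xi (Elem p)"
    and mcC: "max_chain P C" and mcD: "max_chain P D" and ab: "a \<in> PE C" "b \<in> PE D" "a < b"
  obtains C' where "max_chain P C'" "a \<in> PE C'" "b \<in> PE C'"
    "xiplus xi (chain_below C a) + qdist P m a b - m + xiplus xi (chain_above D b) \<le> xiplus xi C'"
    "xiplus xi (chain_below C a) + qdist P m a b - m + xiplus xi (chain_above D b) = xiplus xi C'
       \<Longrightarrow> \<forall>c\<in>chain_interval C' a b. xi (Elem c) = m"
proof -
  obtain C' where C': "max_chain P C'" "a \<in> PE C'" "b \<in> PE C'"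
    "chain_below C' a = chain_below C a" "chain_above C' b = chain_above D b"
    "qdist P m a b = m * (int (card (chain_interval C' a b)) + 1)"
    using qdist_realized_by_max_chain[OF fin mcC mcD ab] by metis
  let ?I = "chain_interval C' a b"
  have fI: "finite ?I" using finite_max_chain[OF fin C'(1)] unfolding chain_interval_def by simp
  have lbI: "\<forall>c\<in>?I. m \<le> xi (Elem c)"
    using lb max_chain_subset[OF C'(1)] unfolding chain_interval_def by blast
  have split: "xiplus xi C' = xiplus xi (chain_below C a) + xiplus xi ?I + xiplus xi (chain_above D b)"
    using xiplus_chain_split[OF fin C'(1-3) ab(3)] C'(4,5) by simp
  have "m * int (card ?I) \<le> xiplus xi ?I"
    unfolding xiplus_def using sum_bounded_below[of ?I m "\<lambda>c. xi (Elem c)"] lbI by (simp add: mult.commute)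
  moreover have "xiplus xi ?I = m * int (card ?I) \<Longrightarrow> \<forall>c\<in>?I. xi (Elem c) = m"
    using sum_eq_card_lower_bound[OF fI lbI] unfolding xiplus_def by blast
  ultimately show thesis
    using that[OF C'(1-3)] split C'(6) by (simp add: algebra_simps)
qed

lemma qdist_splice_bound:
  assumes fin: "finite P" and S: "Sm P eps xi"
    and mcC: "max_chain P C" and mcD: "max_chain P D" and ab: "a \<in> PE C" "b \<in> PE D" "a < b"
  shows "xiplus xi (chain_below C a) + qdist P eps a b - eps + xiplus xi (chain_above D b) \<le> xi NInf - eps"
proof -
  obtain C' where "max_chain P C'"
    "xiplus xi (chain_below C a) + qdist P eps a b - eps + xiplus xi (chain_above D b) \<le> xiplus xi C'"
    using qdist_splice[OF fin _ mcC mcD ab] Sm_lower_bound[OF S] by metis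
  then show ?thesis using Sm_max_chain[OF S] by fastforce
qed

lemma qdist_splice_tight:
  assumes fin: "finite P" and S: "Sm P eps xi"
    and mcC: "max_chain P C" and mcD: "max_chain P D" and ab: "a \<in> PE C" "b \<in> PE D" "a < b"
    and tight: "xi NInf - eps \<le> xiplus xi (chain_below C a) + qdist P eps a b - eps + xiplus xi (chain_above D b)"
  obtains C' where "C' \<in> Cxi P xi (xi NInf - eps)" "a \<in> PE C'" "b \<in> PE C'"
    "\<forall>c\<in>chain_interval C' a b. xi (Elem c) = eps"
proof -
  obtain C' where C': "max_chain P C'" "a \<in> PE C'" "b \<in> PE C'"
    "xiplus xi (chain_below C a) + qdist P eps a b - eps + xiplus xi (chain_above D b) \<le> xiplus xi C'"
    "xiplus xi (chain_below C a) + qdist P eps a b - eps + xiplus xi (chain_above D b) = xiplus xi C'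
       \<Longrightarrow> \<forall>c\<in>chain_interval C' a b. xi (Elem c) = eps"
    using qdist_splice[OF fin _ mcC mcD ab] Sm_lower_bound[OF S] by metis
  have "xiplus xi C' = xi NInf - eps"
    using C'(4) tight Sm_max_chain[OF S C'(1)] by linarith
  then show thesis
    using that[of C'] C' tight by (simp add: Cxi_def)
qed

section \<open>Shortening zigzags\<close>

text \<open>Zigzags in terms of the extended sequences \<open>X = lowE x\<close> and \<open>Y = highE y t\<close>, on which
  deleting segments is a uniform reindexing.\<close>

definition ext_zigzag :: "('a::order) set \<Rightarrow> ('a ext \<Rightarrow> int) \<Rightarrow> int \<Rightarrow> nat \<Rightarrow> (nat \<Rightarrow> 'a ext)
    \<Rightarrow> (nat \<Rightarrow> 'a ext) \<Rightarrow> (nat \<Rightarrow> 'a set) \<Rightarrow> bool" where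
  "ext_zigzag P xi eps t X Y C \<longleftrightarrow>
     (\<forall>l\<le>t. C l \<in> Cxi P xi (xi NInf - eps) \<and> X l \<in> PE (C l) \<and> Y l \<in> PE (C l) \<and> X l < Y l \<and>
        (\<forall>c\<in>chain_interval (C l) (X l) (Y l). xi (Elem c) = eps)) \<and>
     (\<forall>l<t. X (Suc l) < Y l)"

lemma zigzag_imp_ext_zigzag:
  assumes Z: "zigzag P xi eps t y x C"
  shows "ext_zigzag P xi eps t (lowE x) (highE y t) C"
  unfolding ext_zigzag_def
proof (intro conjI allI impI)
  fix l assume l: "l \<le> t"
  show "C l \<in> Cxi P xi (xi NInf - eps)" using Z l unfolding zigzag_def by blast
  show "lowE x l \<in> PE (C l)"
    using zigzagD(5)[OF Z, of l] l unfolding lowE_def PE_def by auto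
  show "highE y t l \<in> PE (C l)"
    using zigzagD(4)[OF Z, of l] l unfolding highE_def PE_def by auto
  show "lowE x l < highE y t l"
    using Z l unfolding zigzag_def lowE_def highE_def by auto
  show "\<forall>c\<in>chain_interval (C l) (lowE x l) (highE y t l). xi (Elem c) = eps"
    using zigzagD(6)[OF Z l] unfolding chain_interval_def by blast
next
  fix l assume "l < t"
  then show "lowE x (Suc l) < highE y t l"
    using zigzagD(1)[OF Z] unfolding lowE_def highE_def by simp
qed

lemma ext_zigzag_imp_zigzag:
  assumes Z: "ext_zigzag P xi eps t (lowE x) (highE y t) C"
  shows "zigzag P xi eps t y x C"
proof -
  have A: "C l \<in> Cxi P xi (xi NInf - eps)" "lowE x l \<in> PE (C l)" "highE y t l \<in> PE (C l)"
    "lowE x l < highE y t l" "\<forall>c\<in>chain_interval (C l) (lowE x l) (highE y t l). xi (Elem c) = eps"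
    if "l \<le> t" for l
    using Z that unfolding ext_zigzag_def by auto
  have B: "x (Suc l) < y l" if "l < t" for l
    using Z that unfolding ext_zigzag_def lowE_def highE_def by auto
  have x_mem: "x l \<in> C l" if "0 < l" "l \<le> t" for l
    using A(2)[OF that(2)] that(1) unfolding lowE_def PE_def by auto
  have y_mem: "y l \<in> C l" if "l < t" for l
    using A(3)[of l] that unfolding highE_def PE_def by auto
  have "x l < y l" if "1 \<le> l" "l < t" for l
    using A(4)[of l] that unfolding lowE_def highE_def by auto
  moreover have "y l \<in> P" "x (Suc l) \<in> P" if "l < t" for l
    using y_mem[OF that] x_mem[of "Suc l"] A(1) that Cxi_subset
    by (metis Suc_leI less_imp_le subsetD zero_less_Suc)+
  moreover have "\<forall>c\<in>C l. lowE x l < Elem c \<and> Elem c < highE y t l \<longrightarrow> xi (Elem c) = eps"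
    if "l \<le> t" for l
    using A(5)[OF that] unfolding chain_interval_def by blast
  ultimately show ?thesis
    unfolding zigzag_def using A(1) B x_mem y_mem by (auto simp: Suc_le_eq)
qed

lemma zigzag_iff_ext_zigzag:
  "zigzag P xi eps t y x C \<longleftrightarrow> ext_zigzag P xi eps t (lowE x) (highE y t) C"
  using zigzag_imp_ext_zigzag ext_zigzag_imp_zigzag by blast

lemma ext_zigzagD:
  assumes "ext_zigzag P xi eps t X Y C"
  shows "l \<le> t \<Longrightarrow> C l \<in> Cxi P xi (xi NInf - eps)"
    and "l \<le> t \<Longrightarrow> max_chain P (C l)"
    and "l \<le> t \<Longrightarrow> xiplus xi (C l) = xi NInf - eps"
    and "l \<le> t \<Longrightarrow> X l \<in> PE (C l)"
    and "l \<le> t \<Longrightarrow> Y l \<in> PE (C l)"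
    and "l \<le> t \<Longrightarrow> X l < Y l"
    and "l \<le> t \<Longrightarrow> \<forall>c\<in>chain_interval (C l) (X l) (Y l). xi (Elem c) = eps"
    and "l < t \<Longrightarrow> X (Suc l) < Y l"
  using assms unfolding ext_zigzag_def Cxi_def by auto

lemma qseq_same: "qseq P eps W Z i i = qdist P eps (W i) (Z i)"
  unfolding qseq_def by simp

lemma qseq_Suc:
  "i \<le> j \<Longrightarrow> qseq P eps W Z i (Suc j) =
     qseq P eps W Z i j + qdist P eps (W (Suc j)) (Z (Suc j)) - qdist P eps (W (Suc j)) (Z j)"
  unfolding qseq_def by simp

text \<open>Each induction step splices \<open>C (Suc n)\<close> below \<open>X (Suc n)\<close> to \<open>C n\<close> above \<open>Y n\<close>
  along a saturated chain realising \<open>qdist\<close>; the bound of \<open>Sm\<close> on this new maximal chain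
  is the telescoping step.\<close>

lemma ext_zigzag_qseq_bound:
  assumes fin: "finite P" and S: "Sm P eps xi" and Z: "ext_zigzag P xi eps t X Y C"
    and ij: "i \<le> j" "j \<le> t"
  shows "xi NInf - eps \<le>
    xiplus xi (chain_below (C i) (X i)) + qseq P eps X Y i j - eps + xiplus xi (chain_above (C j) (Y j))"
  using ij
proof (induction j rule: dec_induct)
  case base
  then have "xiplus xi (C i) \<le> xiplus xi (chain_below (C i) (X i)) + qdist P eps (X i) (Y i)
      - eps + xiplus xi (chain_above (C i) (Y i))"
    using ext_zigzagD[OF Z] by (intro xiplus_le_qdist[OF fin]) auto
  then show ?case using ext_zigzagD(3)[OF Z base] qseq_same[of P eps X Y i] by linarith
next
  case (step n)
  have "xiplus xi (C (Suc n)) \<le> xiplus xi (chain_below (C (Suc n)) (X (Suc n)))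
      + qdist P eps (X (Suc n)) (Y (Suc n)) - eps + xiplus xi (chain_above (C (Suc n)) (Y (Suc n)))"
    using ext_zigzagD[OF Z] step.prems by (intro xiplus_le_qdist[OF fin]) auto
  moreover have "xiplus xi (chain_below (C (Suc n)) (X (Suc n))) + qdist P eps (X (Suc n)) (Y n)
      - eps + xiplus xi (chain_above (C n) (Y n)) \<le> xi NInf - eps"
    using ext_zigzagD[OF Z] step.prems by (intro qdist_splice_bound[OF fin S]) auto
  ultimately show ?case
    using step.IH step.prems ext_zigzagD(3)[OF Z \<open>Suc n \<le> t\<close>] qseq_Suc[OF step.hyps(1), of P eps X Y] by linarith
qed

lemma ext_zigzag_shortcut_comparable:
  assumes Z: "ext_zigzag P xi eps t X Y C" and ij: "i + 2 \<le> j" "j \<le> t" and v: "X j < Y i"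
  defines "f \<equiv> \<lambda>l. if l \<le> i then l else l + (j - i - 1)"
  shows "ext_zigzag P xi eps (t - (j - i - 1)) (X \<circ> f) (Y \<circ> f) (C \<circ> f)"
  unfolding ext_zigzag_def
proof (rule conjI; intro allI impI)
  fix l assume "l \<le> t - (j - i - 1)"
  then have "f l \<le> t" unfolding f_def using ij by auto
  then show "(C \<circ> f) l \<in> Cxi P xi (xi NInf - eps) \<and> (X \<circ> f) l \<in> PE ((C \<circ> f) l) \<and>
      (Y \<circ> f) l \<in> PE ((C \<circ> f) l) \<and> (X \<circ> f) l < (Y \<circ> f) l \<and>
      (\<forall>c\<in>chain_interval ((C \<circ> f) l) ((X \<circ> f) l) ((Y \<circ> f) l). xi (Elem c) = eps)"
    using Z unfolding ext_zigzag_def by simp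
next
  fix l assume l: "l < t - (j - i - 1)"
  consider "l < i" | "l = i" | "i < l" by arith
  then show "(X \<circ> f) (Suc l) < (Y \<circ> f) l"
  proof cases
    case 1
    then show ?thesis using ext_zigzagD(8)[OF Z, of l] ij unfolding f_def by auto
  next
    case 2
    then show ?thesis using v ij unfolding f_def by auto
  next
    case 3
    then have "f (Suc l) = Suc (l + (j - i - 1))" "f l = l + (j - i - 1)" "l + (j - i - 1) < t"
      using l ij unfolding f_def by auto
    then show ?thesis using ext_zigzagD(8)[OF Z] by simp
  qed
qed

lemma ext_zigzag_shortcut_chain:
  assumes Z: "ext_zigzag P xi eps t X Y C" and ij: "i < j" "j \<le> t" and XY: "X i < Y j"
    and Cs: "Cs \<in> Cxi P xi (xi NInf - eps)" "X i \<in> PE Cs" "Y j \<in> PE Cs"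
      "\<forall>c\<in>chain_interval Cs (X i) (Y j). xi (Elem c) = eps"
  defines "fx \<equiv> \<lambda>l. if l \<le> i then l else l + (j - i)"
    and "fy \<equiv> \<lambda>l. if l < i then l else l + (j - i)"
    and "C' \<equiv> \<lambda>l. if l < i then C l else if l = i then Cs else C (l + (j - i))"
  shows "ext_zigzag P xi eps (t - (j - i)) (X \<circ> fx) (Y \<circ> fy) C'"
  unfolding ext_zigzag_def
proof (rule conjI; intro allI impI)
  fix l assume l: "l \<le> t - (j - i)"
  consider "l < i" | "l = i" | "i < l" by arith
  then show "C' l \<in> Cxi P xi (xi NInf - eps) \<and> (X \<circ> fx) l \<in> PE (C' l) \<and> (Y \<circ> fy) l \<in> PE (C' l) \<and>
      (X \<circ> fx) l < (Y \<circ> fy) l \<and> (\<forall>c\<in>chain_interval (C' l) ((X \<circ> fx) l) ((Y \<circ> fy) l). xi (Elem c) = eps)"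
  proof cases
    case 1
    then have "fx l = l" "fy l = l" "C' l = C l" "l \<le> t" using ij unfolding fx_def fy_def C'_def by auto
    then show ?thesis using Z unfolding ext_zigzag_def by simp
  next
    case 2
    then have "fx l = i" "fy l = j" "C' l = Cs" using ij unfolding fx_def fy_def C'_def by auto
    then show ?thesis using Cs XY by simp
  next
    case 3
    then have "fx l = l + (j - i)" "fy l = l + (j - i)" "C' l = C (l + (j - i))" "l + (j - i) \<le> t"
      using l ij unfolding fx_def fy_def C'_def by auto
    then show ?thesis using Z unfolding ext_zigzag_def by simp
  qed
next
  fix l assume l: "l < t - (j - i)"
  consider "l < i" | "l = i" | "i < l" by arith
  then show "(X \<circ> fx) (Suc l) < (Y \<circ> fy) l"
  proof cases
    case 1
    then show ?thesis using ext_zigzagD(8)[OF Z, of l] ij unfolding fx_def fy_def by auto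
  next
    case 2
    then have "fx (Suc l) = Suc j" "fy l = j" "j < t" using l ij unfolding fx_def fy_def by auto
    then show ?thesis using ext_zigzagD(8)[OF Z] by simp
  next
    case 3
    then have "fx (Suc l) = Suc (l + (j - i))" "fy l = l + (j - i)" "l + (j - i) < t"
      using l ij unfolding fx_def fy_def by auto
    then show ?thesis using ext_zigzagD(8)[OF Z] by simp
  qed
qed

lemma lowE_comp:
  assumes "\<And>l. f l = 0 \<longleftrightarrow> l = 0"
  shows "lowE x \<circ> f = lowE (x \<circ> f)"
proof
  fix l show "(lowE x \<circ> f) l = lowE (x \<circ> f) l" using assms[of l] by (simp add: lowE_def)
qed

lemma highE_comp:
  assumes "\<And>l. f l = t \<longleftrightarrow> l = t'"
  shows "highE y t \<circ> f = highE (y \<circ> f) t'"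
proof
  fix l show "(highE y t \<circ> f) l = highE (y \<circ> f) t' l" using assms[of l] by (simp add: highE_def)
qed

lemma zigzag_shortcut_if_not_condN':
  assumes Z: "zigzag P xi eps t y x C" and ij: "i + 2 \<le> j" "j \<le> t" and v: "x j < y i"
  obtains t' y' x' C' where "t' < t" "zigzag P xi eps t' y' x' C'"
proof -
  define f where "f l = (if l \<le> i then l else l + (j - i - 1))" for l
  let ?t' = "t - (j - i - 1)"
  have "lowE x j < highE y t i" using v ij by (simp add: lowE_def highE_def)
  then have "ext_zigzag P xi eps ?t' (lowE x \<circ> f) (highE y t \<circ> f) (C \<circ> f)"
    using ext_zigzag_shortcut_comparable[OF zigzag_imp_ext_zigzag[OF Z] ij] unfolding f_def by simp
  moreover have "f l = 0 \<longleftrightarrow> l = 0" for l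
    unfolding f_def by simp
  then have "lowE x \<circ> f = lowE (x \<circ> f)"
    by (rule lowE_comp)
  moreover have "f l = t \<longleftrightarrow> l = ?t'" for l
    using ij unfolding f_def by (cases "l \<le> i") auto
  then have "highE y t \<circ> f = highE (y \<circ> f) ?t'"
    by (rule highE_comp)
  ultimately have "zigzag P xi eps ?t' (y \<circ> f) (x \<circ> f) (C \<circ> f)"
    by (simp add: zigzag_iff_ext_zigzag)
  moreover have "?t' < t" using ij by arith
  ultimately show thesis by (intro that)
qed

lemma zigzag_shortcut_if_not_qreduced:
  assumes fin: "finite P" and S: "Sm P eps xi" and Z: "zigzag P xi eps t y x C"
    and not_reduced: "\<not> qreduced P eps t y x"
  obtains t' y' x' C' where "t' < t" "zigzag P xi eps t' y' x' C'"
proof -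
  define X where "X = lowE x"
  define Y where "Y = highE y t"
  obtain i j where ij: "i < j" "j \<le> t" "X i < Y j" and q: "qseq P eps X Y i j \<le> qdist P eps (X i) (Y j)"
    using not_reduced unfolding qreduced_def X_def Y_def by (auto simp: not_less)
  have ZE: "ext_zigzag P xi eps t X Y C" using zigzag_imp_ext_zigzag[OF Z] unfolding X_def Y_def .
  have "xi NInf - eps \<le>
      xiplus xi (chain_below (C i) (X i)) + qseq P eps X Y i j - eps + xiplus xi (chain_above (C j) (Y j))"
    using ext_zigzag_qseq_bound[OF fin S ZE] ij by simp
  with q have "xi NInf - eps \<le> xiplus xi (chain_below (C i) (X i)) + qdist P eps (X i) (Y j)
      - eps + xiplus xi (chain_above (C j) (Y j))"
    by linarith
  then obtain Cs where Cs: "Cs \<in> Cxi P xi (xi NInf - eps)" "X i \<in> PE Cs" "Y j \<in> PE Cs"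
    "\<forall>c\<in>chain_interval Cs (X i) (Y j). xi (Elem c) = eps"
    using qdist_splice_tight[OF fin S ext_zigzagD(2)[OF ZE] ext_zigzagD(2)[OF ZE]
        ext_zigzagD(4)[OF ZE] ext_zigzagD(5)[OF ZE] ij(3)] ij by auto
  define fx where "fx l = (if l \<le> i then l else l + (j - i))" for l
  define fy where "fy l = (if l < i then l else l + (j - i))" for l
  define C' where "C' l = (if l < i then C l else if l = i then Cs else C (l + (j - i)))" for l
  let ?t' = "t - (j - i)"
  have "ext_zigzag P xi eps ?t' (X \<circ> fx) (Y \<circ> fy) C'"
    using ext_zigzag_shortcut_chain[OF ZE ij Cs] unfolding fx_def fy_def C'_def by simp
  moreover have "fx l = 0 \<longleftrightarrow> l = 0" for l
    unfolding fx_def by simp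
  then have "X \<circ> fx = lowE (x \<circ> fx)"
    unfolding X_def by (rule lowE_comp)
  moreover have "fy l = t \<longleftrightarrow> l = ?t'" for l
    using ij unfolding fy_def by (cases "l < i") auto
  then have "Y \<circ> fy = highE (y \<circ> fy) ?t'"
    unfolding Y_def by (rule highE_comp)
  ultimately have "zigzag P xi eps ?t' (y \<circ> fy) (x \<circ> fx) C'"
    by (simp add: zigzag_iff_ext_zigzag)
  moreover have "?t' < t" using ij by arith
  ultimately show thesis by (intro that)
qed

lemma zigzag_reduce:
  assumes fin: "finite P" and S: "Sm P eps xi"
  shows "zigzag P xi eps t y x C \<Longrightarrow>
    \<exists>t y x C. zigzag P xi eps t y x C \<and> condN' P t y x \<and> qreduced P eps t y x"
proof (induction t arbitrary: y x C rule: less_induct)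
  case (less t)
  consider "condN' P t y x" "qreduced P eps t y x" | "\<not> condN' P t y x" | "\<not> qreduced P eps t y x"
    by blast
  then show ?case
  proof cases
    case 1
    then show ?thesis using less.prems by blast
  next
    case 2
    have "(\<forall>i<t. y i \<in> P \<and> x (Suc i) \<in> P \<and> x (Suc i) < y i) \<and> (\<forall>i. 1 \<le> i \<and> i < t \<longrightarrow> x i < y i)"
      using less.prems unfolding zigzag_def by blast
    with 2 obtain i j where "i + 2 \<le> j" "j \<le> t" "x j < y i"
      unfolding condN'_def by blast
    then obtain t' y' x' C' where "t' < t" "zigzag P xi eps t' y' x' C'"
      using zigzag_shortcut_if_not_condN'[OF less.prems] by blast
    then show ?thesis by (rule less.IH)
  next
    case 3
    then obtain t' y' x' C' where "t' < t" "zigzag P xi eps t' y' x' C'"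
      using zigzag_shortcut_if_not_qreduced[OF fin S less.prems] by blast
    then show ?thesis by (rule less.IH)
  qed
qed

definition reduced_zigzag :: "('a::order) set \<Rightarrow> ('a ext \<Rightarrow> int) \<Rightarrow> int \<Rightarrow> nat \<Rightarrow> (nat \<Rightarrow> 'a)
    \<Rightarrow> (nat \<Rightarrow> 'a) \<Rightarrow> (nat \<Rightarrow> 'a set) \<Rightarrow> bool" where
  "reduced_zigzag P xi eps t y x C \<longleftrightarrow> condN' P t y x \<and> qreduced P eps t y x \<and>
     (\<forall>i\<le>t. C i \<in> Cxi P xi (xi NInf - eps)) \<and>
     (t = 0 \<or> (y 0 \<in> C 0 \<and> x t \<in> C t \<and> (\<forall>i. 1 \<le> i \<and> i < t \<longrightarrow> x i \<in> C i \<and> y i \<in> C i))) \<and>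
     (\<forall>i\<le>t. \<forall>c\<in>C i. lowE x i < Elem c \<and> Elem c < highE y t i \<longrightarrow> xi (Elem c) = eps)"

lemma reduced_zigzag_iff:
  "reduced_zigzag P xi eps t y x C \<longleftrightarrow>
     zigzag P xi eps t y x C \<and> condN' P t y x \<and> qreduced P eps t y x"
  unfolding reduced_zigzag_def zigzag_def condN'_def by (intro iffI conjI) (elim conjE; assumption)+

lemma exists_zigzag_iff_reduced:
  "finite P \<Longrightarrow> Sm P eps xi \<Longrightarrow>
    (\<exists>s z w C. zigzag P xi eps s z w C) \<longleftrightarrow> (\<exists>t y x C. reduced_zigzag P xi eps t y x C)"
  using zigzag_reduce reduced_zigzag_iff by metis

theorem mainTheorem8:
  fixes P :: "('a::order) set" and eps :: int and xi :: "'a ext \<Rightarrow> int" and d :: int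
  assumes "finite P"
    and "eps = 1 \<or> eps = -1"
    and "Sm P eps xi"
    and "d = xi NInf"
  shows "(is_generator P eps xi \<longleftrightarrow>
     (\<exists>s z w C. (\<forall>i<s. z i \<in> P \<and> w (Suc i) \<in> P \<and> w (Suc i) < z i) \<and>
        (\<forall>i. 1 \<le> i \<and> i < s \<longrightarrow> w i < z i) \<and>
        (\<forall>i\<le>s. C i \<in> Cxi P xi (d - eps)) \<and>
        (s = 0 \<or> (z 0 \<in> C 0 \<and> w s \<in> C s \<and>
                   (\<forall>i. 1 \<le> i \<and> i < s \<longrightarrow> w i \<in> C i \<and> z i \<in> C i))) \<and>
        (\<forall>i\<le>s. \<forall>c\<in>C i. lessE (lowE w i) (Elem c) \<and> lessE (Elem c) (highE z s i)
              \<longrightarrow> xi (Elem c) = eps)))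
   \<and> (is_generator P eps xi \<longleftrightarrow>
     (\<exists>t y x C. condN' P t y x \<and> qreduced P eps t y x \<and>
        (\<forall>i\<le>t. C i \<in> Cxi P xi (d - eps)) \<and>
        (t = 0 \<or> (y 0 \<in> C 0 \<and> x t \<in> C t \<and>
                   (\<forall>i. 1 \<le> i \<and> i < t \<longrightarrow> x i \<in> C i \<and> y i \<in> C i))) \<and>
        (\<forall>i\<le>t. \<forall>c\<in>C i. lessE (lowE x i) (Elem c) \<and> lessE (Elem c) (highE y t i)
              \<longrightarrow> xi (Elem c) = eps)))"
proof -
  have "is_generator P eps xi \<longleftrightarrow> (\<exists>s z w C. zigzag P xi eps s z w C)"
    using zigzag_imp_generator[OF assms(1,3)] generator_imp_zigzag[OF assms(1,3)] by blast
  moreover note exists_zigzag_iff_reduced[OF assms(1,3)]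
  ultimately show ?thesis
    unfolding lessE_eq_less assms(4) zigzag_def reduced_zigzag_def by (simp only:)
qed

end
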